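(* For all integers $m\ge 2$ and $f$ with $0\le f\le \binom{m}{2}$ there exists a constant $c>0$ such that $h_2(n,m,f) > c\, n^{1/(m-1)}$ for all $n\ge 1$. That is, every $n$-vertex graph $G$ that contains no induced subgraph with exactly $m$ vertices and exactly $f$ edges has a clique or an independent set of size greater than $c\,n^{1/(m-1)}$.
   Context: For an $r$-uniform hypergraph ($r$-graph) $H$, a homogeneous set is a set of vertices that is either a clique (every $r$-subset is an edge) or a coclique (no $r$-subset is an edge); $h(H)$ denotes the size of a largest homogeneous set. An $(m,f)$-graph is an $r$-graph with $m$ vertices and $f$ edges; $H$ is $(m,f)$-free if it contains no induced sub-hypergraph that is an $(m,f)$-graph. For a set $Q$ of pairs $(m,f)$, $H$ is $Q$-free if it is $(m,f)$-free for every $(m,f)\in Q$. $h_r(n,Q)$ is the minimum of $h(H)$ over all $n$-vertex $Q$-free $r$-graphs $H$, and $h_r(n,m,f)=h_r(n,\{(m,f)\})$. A 2-graph is a graph. *)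

theory Defs
  imports "HOL-Analysis.Analysis"
begin

definition rgraph :: "nat \<Rightarrow> 'a set \<Rightarrow> 'a set set \<Rightarrow> bool" where
  "rgraph r V E \<longleftrightarrow> finite V \<and> (\<forall>e\<in>E. e \<subseteq> V \<and> card e = r)"

definition homogeneous :: "nat \<Rightarrow> 'a set \<Rightarrow> 'a set set \<Rightarrow> 'a set \<Rightarrow> bool" where
  "homogeneous r V E S \<longleftrightarrow> S \<subseteq> V \<and>
     ((\<forall>e. e \<subseteq> S \<and> card e = r \<longrightarrow> e \<in> E) \<or> (\<forall>e. e \<subseteq> S \<and> card e = r \<longrightarrow> e \<notin> E))"

definition hom_number :: "nat \<Rightarrow> 'a set \<Rightarrow> 'a set set \<Rightarrow> nat" where
  "hom_number r V E = Max {card S | S. homogeneous r V E S}"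

definition has_induced :: "'a set \<Rightarrow> 'a set set \<Rightarrow> nat \<Rightarrow> nat \<Rightarrow> bool" where
  "has_induced V E m f \<longleftrightarrow> (\<exists>S. S \<subseteq> V \<and> card S = m \<and> card {e\<in>E. e \<subseteq> S} = f)"

definition mf_free :: "'a set \<Rightarrow> 'a set set \<Rightarrow> nat \<Rightarrow> nat \<Rightarrow> bool" where
  "mf_free V E m f \<longleftrightarrow> \<not> has_induced V E m f"

definition Q_free :: "'a set \<Rightarrow> 'a set set \<Rightarrow> (nat \<times> nat) set \<Rightarrow> bool" where
  "Q_free V E Q \<longleftrightarrow> (\<forall>(m,f)\<in>Q. mf_free V E m f)"

text \<open>h_r(n,Q): minimum of h(H) over all n-vertex Q-free r-graphs H. Every n-vertex
  r-graph is isomorphic to one on the vertex set {0..<n}, so we range over those.\<close>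
definition h_rQ :: "nat \<Rightarrow> nat \<Rightarrow> (nat \<times> nat) set \<Rightarrow> nat" where
  "h_rQ r n Q = Min {hom_number r {0..<n} E | E. rgraph r {0..<n} E \<and> Q_free {0..<n} E Q}"

definition h_rmf :: "nat \<Rightarrow> nat \<Rightarrow> nat \<Rightarrow> nat \<Rightarrow> nat" where
  "h_rmf r n m f = h_rQ r n {(m, f)}"

end

theory Submission
  imports Defs
begin

text \<open>Every $(m,f)$-free graph on at least $t^{m-1}$ vertices has a homogeneous set of size $t$,
  by induction on $m$. Passing to the complement turns $f$ into $\binom{m}{2} - f$, so in the step
  from $m$ to $m+1$ one may assume $f \ge m$. If some vertex $v$ has at least $t^{m-1}$ neighbours,
  its neighbourhood is $(m, f-m)$-free, because adding $v$ to $m$ of its neighbours adds exactly $m$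
  edges. Otherwise all degrees are below $t^{m-1}$ and a greedy choice gives an independent set of
  size $t$. Taking $t = \lfloor n^{1/(m-1)} \rfloor$ yields the bound with $c = 1/2$.\<close>

abbreviation edges_within :: "'a set set \<Rightarrow> 'a set \<Rightarrow> 'a set set" where
  "edges_within E S \<equiv> {e\<in>E. e \<subseteq> S}"

definition compl_graph :: "'a set \<Rightarrow> 'a set set \<Rightarrow> 'a set set" where
  "compl_graph V E = {e. e \<subseteq> V \<and> card e = 2} - E"

lemma card_edges_within_le:
  assumes "\<forall>e\<in>E. card e = 2" and "finite S"
  shows "card (edges_within E S) \<le> card S choose 2"
proof -
  have "card (edges_within E S) \<le> card {e. e \<subseteq> S \<and> card e = 2}"
    using assms by (intro card_mono) auto
  also have "\<dots> = card S choose 2"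
    using assms(2) by (simp add: n_subsets)
  finally show ?thesis .
qed

lemma card_edges_within_compl_graph:
  assumes "\<forall>e\<in>E. card e = 2" and "S \<subseteq> V" and "finite S"
  shows "card (edges_within (compl_graph V E) S) = (card S choose 2) - card (edges_within E S)"
proof -
  have "edges_within (compl_graph V E) S = {e. e \<subseteq> S \<and> card e = 2} - edges_within E S"
    using assms(2) by (auto simp: compl_graph_def)
  moreover have "edges_within E S \<subseteq> {e. e \<subseteq> S \<and> card e = 2}"
    using assms(1) by auto
  ultimately show ?thesis
    using assms(3) by (simp add: card_Diff_subset n_subsets)
qed

lemma has_induced_compl_graph:
  assumes "\<forall>e\<in>E. card e = 2" and "finite V" and "f \<le> m choose 2"
  shows "has_induced V (compl_graph V E) m ((m choose 2) - f) \<longleftrightarrow> has_induced V E m f"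
proof -
  have "card (edges_within (compl_graph V E) S) = (m choose 2) - f \<longleftrightarrow> card (edges_within E S) = f"
    if "S \<subseteq> V" "card S = m" for S
  proof -
    have "finite S"
      using that(1) assms(2) by (rule finite_subset)
    then have "card (edges_within E S) \<le> m choose 2"
      using card_edges_within_le[OF assms(1)] that(2) by blast
    moreover have "card (edges_within (compl_graph V E) S) = (m choose 2) - card (edges_within E S)"
      using card_edges_within_compl_graph[OF assms(1) that(1) \<open>finite S\<close>] that(2) by simp
    ultimately show ?thesis
      using assms(3) by linarith
  qed
  then show ?thesis
    unfolding has_induced_def by blast
qed

lemma compl_graph_uniform: "\<forall>e\<in>compl_graph V E. card e = 2"
  by (simp add: compl_graph_def)

lemma homogeneous_compl_graph:
  "homogeneous 2 V (compl_graph V E) S \<longleftrightarrow> homogeneous 2 V E S"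
  unfolding homogeneous_def compl_graph_def by blast

lemma homogeneous_mono: "homogeneous r W E S \<Longrightarrow> W \<subseteq> V \<Longrightarrow> homogeneous r V E S"
  unfolding homogeneous_def by blast

lemma homogeneous_if_independent:
  assumes "S \<subseteq> V" and "\<forall>x\<in>S. \<forall>y\<in>S. x \<noteq> y \<longrightarrow> {x,y} \<notin> E"
  shows "homogeneous 2 V E S"
  using assms unfolding homogeneous_def by (auto simp: card_2_iff)

lemma card_edges_within_insert_adjacent:
  assumes "\<forall>e\<in>E. card e = 2" and "v \<notin> S" and "finite S" and "\<forall>x\<in>S. {v,x} \<in> E"
  shows "card (edges_within E (insert v S)) = card (edges_within E S) + card S"
proof -
  have split: "edges_within E (insert v S) = edges_within E S \<union> (\<lambda>x. {v,x}) ` S"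
  proof (intro equalityI subsetI)
    fix e assume e: "e \<in> edges_within E (insert v S)"
    then obtain x y where "e = {x,y}" "x \<noteq> y"
      using assms(1) by (auto simp: card_2_iff)
    with e show "e \<in> edges_within E S \<union> (\<lambda>x. {v,x}) ` S"
      by (cases "v \<in> e") auto
  qed (use assms(4) in auto)
  have "inj_on (\<lambda>x. {v,x}) S"
    using assms(2) by (auto simp: inj_on_def doubleton_eq_iff)
  moreover have "edges_within E S \<inter> (\<lambda>x. {v,x}) ` S = {}"
    using assms(2) by auto
  moreover have "finite (edges_within E S)"
    using assms(3) by (auto intro: finite_subset[of _ "Pow S"])
  ultimately show ?thesis
    unfolding split using assms(3) by (simp add: card_Un_disjoint card_image)
qed

lemma greedy_independent_set:
  fixes R :: "'a \<Rightarrow> 'a \<Rightarrow> bool"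
  assumes "finite V" and "\<And>x y. R x y \<longleftrightarrow> R y x"
    and "\<forall>v\<in>V. card {x\<in>V. x \<noteq> v \<and> R v x} \<le> D" and "k * (D + 1) \<le> card V"
  shows "\<exists>I\<subseteq>V. card I = k \<and> (\<forall>x\<in>I. \<forall>y\<in>I. x \<noteq> y \<longrightarrow> \<not> R x y)"
  using assms(1,3,4)
proof (induction k arbitrary: V)
  case 0
  then show ?case by auto
next
  case (Suc k)
  then obtain v where v: "v \<in> V"
    by fastforce
  define A where "A = insert v {x\<in>V. x \<noteq> v \<and> R v x}"
  define W where "W = V - A"
  have "A \<subseteq> V" "finite W"
    using v Suc.prems(1) by (auto simp: A_def W_def)
  have "card A \<le> D + 1"
    using card_insert_le_m1[of _ "{x\<in>V. x \<noteq> v \<and> R v x}" v] Suc.prems v by (simp add: A_def)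
  then have "k * (D + 1) \<le> card W"
    using Suc.prems \<open>A \<subseteq> V\<close> card_Diff_subset[of A V] finite_subset
    by (fastforce simp: W_def algebra_simps)
  moreover have "\<forall>u\<in>W. card {x\<in>W. x \<noteq> u \<and> R u x} \<le> D"
  proof
    fix u assume "u \<in> W"
    have "card {x\<in>W. x \<noteq> u \<and> R u x} \<le> card {x\<in>V. x \<noteq> u \<and> R u x}"
      using Suc.prems(1) by (intro card_mono) (auto simp: W_def)
    with Suc.prems(2) \<open>u \<in> W\<close> show "card {x\<in>W. x \<noteq> u \<and> R u x} \<le> D"
      by (fastforce simp: W_def)
  qed
  ultimately obtain I where I: "I \<subseteq> W" "card I = k" "\<forall>x\<in>I. \<forall>y\<in>I. x \<noteq> y \<longrightarrow> \<not> R x y"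
    using Suc.IH \<open>finite W\<close> by blast
  have "v \<notin> I" "\<forall>y\<in>I. \<not> R v y" "finite I"
    using I(1) \<open>finite W\<close> by (auto simp: W_def A_def finite_subset)
  with I v assms(2) show ?case
    by (intro exI[of _ "insert v I"]) (auto simp: W_def)
qed

lemma Suc_choose_two: "Suc m choose 2 = m + (m choose 2)"
  using binomial_Suc_Suc[of m 1] by (simp only: Suc_1 choose_one)

lemma pred_le_choose_two: "m - 1 \<le> m choose 2"
  by (cases m) (simp_all add: Suc_choose_two)

lemma homogeneous_set_step:
  assumes E: "\<forall>e\<in>E. card e = 2" and "finite V" and "1 \<le> t" and "1 \<le> m"
    and "t ^ m \<le> card V" and "m \<le> f" and free: "\<not> has_induced V E (Suc m) f"
    and IH: "\<And>W. W \<subseteq> V \<Longrightarrow> t ^ (m - 1) \<le> card W \<Longrightarrow> \<not> has_induced W E m (f - m) \<Longrightarrow>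
      \<exists>S. card S = t \<and> homogeneous 2 W E S"
  shows "\<exists>S. card S = t \<and> homogeneous 2 V E S"
proof -
  define N where "N v = {x\<in>V. x \<noteq> v \<and> {v,x} \<in> E}" for v
  show ?thesis
  proof (cases "\<exists>v\<in>V. t ^ (m - 1) \<le> card (N v)")
    case True
    then obtain v where v: "v \<in> V" "t ^ (m - 1) \<le> card (N v)"
      by blast
    have "\<not> has_induced (N v) E m (f - m)"
    proof
      assume "has_induced (N v) E m (f - m)"
      then obtain S where S: "S \<subseteq> N v" "card S = m" "card (edges_within E S) = f - m"
        unfolding has_induced_def by blast
      have "finite S" "v \<notin> S" "\<forall>x\<in>S. {v,x} \<in> E"
        using S(1) \<open>finite V\<close> by (auto simp: N_def intro: finite_subset)
      then have "card (edges_within E (insert v S)) = f"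
        using card_edges_within_insert_adjacent[OF E] S(2,3) \<open>m \<le> f\<close> by simp
      moreover have "insert v S \<subseteq> V" "card (insert v S) = Suc m"
        using S v \<open>finite S\<close> \<open>v \<notin> S\<close> by (auto simp: N_def)
      ultimately show False
        using free unfolding has_induced_def by blast
    qed
    then obtain S where "card S = t" "homogeneous 2 (N v) E S"
      using IH[of "N v"] v(2) by (auto simp: N_def)
    then show ?thesis
      using homogeneous_mono[of 2 "N v" E S V] by (auto simp: N_def)
  next
    case False
    then have "\<forall>v\<in>V. card {x\<in>V. x \<noteq> v \<and> {v,x} \<in> E} \<le> t ^ (m - 1) - 1"
      by (auto simp: N_def)
    moreover have "t * (t ^ (m - 1) - 1 + 1) \<le> card V"
      using \<open>1 \<le> t\<close> \<open>1 \<le> m\<close> \<open>t ^ m \<le> card V\<close> by (cases m) simp_all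
    ultimately have "\<exists>I\<subseteq>V. card I = t \<and> (\<forall>x\<in>I. \<forall>y\<in>I. x \<noteq> y \<longrightarrow> {x,y} \<notin> E)"
      by (intro greedy_independent_set[OF \<open>finite V\<close>]) (auto simp: insert_commute)
    then show ?thesis
      using homogeneous_if_independent by blast
  qed
qed

lemma homogeneous_set_if_not_has_induced:
  assumes "1 \<le> m" and "\<forall>e\<in>E. card e = 2" and "finite V" and "f \<le> m choose 2"
    and "1 \<le> t" and "t ^ (m - 1) \<le> card V" and "\<not> has_induced V E m f"
  shows "\<exists>S. card S = t \<and> homogeneous 2 V E S"
  using assms
proof (induction m arbitrary: E V f rule: nat_induct_at_least)
  case base
  then obtain v where "v \<in> V"
    by fastforce
  moreover have "edges_within E {v} = {}"
    using base.prems(1) by (auto simp: subset_singleton_iff)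
  moreover have "f = 0"
    using base.prems(3) by (simp add: choose_two)
  ultimately have "has_induced V E 1 f"
    unfolding has_induced_def by (intro exI[of _ "{v}"]) simp
  with base.prems(6) show ?case
    by contradiction
next
  case (Suc m)
  have dense: "\<exists>S. card S = t \<and> homogeneous 2 V G S"
    if G: "\<forall>e\<in>G. card e = 2" and "m \<le> g" "g \<le> Suc m choose 2" "\<not> has_induced V G (Suc m) g"
    for G g
  proof (rule homogeneous_set_step[OF G \<open>finite V\<close> \<open>1 \<le> t\<close> \<open>1 \<le> m\<close> _ that(2,4)])
    show "t ^ m \<le> card V"
      using Suc.prems(5) by simp
    show "\<exists>S. card S = t \<and> homogeneous 2 W G S"
      if "W \<subseteq> V" "t ^ (m - 1) \<le> card W" "\<not> has_induced W G m (g - m)" for W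
      using Suc.IH[OF G _ _ \<open>1 \<le> t\<close> that(2,3)] \<open>finite V\<close> that(1) \<open>g \<le> Suc m choose 2\<close>
      by (simp add: Suc_choose_two finite_subset)
  qed
  consider "m \<le> f" | "f \<le> m choose 2"
    using pred_le_choose_two[of m] by linarith
  then show ?case
  proof cases
    case 1
    then show ?thesis
      using dense Suc.prems(1,3,6) by blast
  next
    case 2
    let ?G = "compl_graph V E"
    have "\<not> has_induced V ?G (Suc m) ((Suc m choose 2) - f)"
      using has_induced_compl_graph[OF Suc.prems(1,2,3)] Suc.prems(6) by blast
    moreover have "m \<le> (Suc m choose 2) - f"
      using 2 by (simp add: Suc_choose_two)
    ultimately obtain S where "card S = t" "homogeneous 2 V ?G S"
      using dense[OF compl_graph_uniform[of V E]] by fastforce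
    then show ?thesis
      using homogeneous_compl_graph by blast
  qed
qed

lemma card_le_hom_number:
  assumes "finite V" and "homogeneous r V E S"
  shows "card S \<le> hom_number r V E"
proof -
  have "{card S | S. homogeneous r V E S} \<subseteq> card ` Pow V"
    by (auto simp: homogeneous_def)
  then have "finite {card S | S. homogeneous r V E S}"
    using assms(1) finite_subset by blast
  with assms(2) show ?thesis
    unfolding hom_number_def by (intro Max_ge) auto
qed

lemma le_h_rQI:
  assumes "\<exists>E. rgraph r {0..<n} E \<and> Q_free {0..<n} E Q"
    and "\<And>E. rgraph r {0..<n} E \<Longrightarrow> Q_free {0..<n} E Q \<Longrightarrow> k \<le> hom_number r {0..<n} E"
  shows "k \<le> h_rQ r n Q"
proof -
  let ?H = "{hom_number r {0..<n} E | E. rgraph r {0..<n} E \<and> Q_free {0..<n} E Q}"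
  have "?H \<subseteq> hom_number r {0..<n} ` Pow (Pow {0..<n})"
    by (auto simp: rgraph_def)
  then have "finite ?H"
    by (rule finite_subset) simp
  with assms show ?thesis
    unfolding h_rQ_def by (subst Min_ge_iff) auto
qed

lemma not_has_induced_empty: "f \<noteq> 0 \<Longrightarrow> \<not> has_induced V {} m f"
  by (simp add: has_induced_def)

lemma exists_mf_free_graph:
  assumes "2 \<le> m" and "finite V"
  shows "\<exists>E. rgraph 2 V E \<and> mf_free V E m f"
proof (cases "f = 0")
  case True
  have "m choose 2 \<noteq> 0"
    using assms(1) by simp
  then have "\<not> has_induced V (compl_graph V {}) m ((m choose 2) - (m choose 2))"
    using has_induced_compl_graph[of "{}" V "m choose 2" m] not_has_induced_empty assms(2) by blast
  moreover have "rgraph 2 V (compl_graph V {})"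
    using assms(2) by (auto simp: rgraph_def compl_graph_def)
  ultimately show ?thesis
    using True by (auto simp: mf_free_def)
next
  case False
  then show ?thesis
    using assms(2) not_has_induced_empty by (auto simp: rgraph_def mf_free_def)
qed

lemma le_h_rmf:
  assumes "2 \<le> m" and "f \<le> m choose 2" and "1 \<le> t" and "t ^ (m - 1) \<le> n"
  shows "t \<le> h_rmf 2 n m f"
  unfolding h_rmf_def
proof (rule le_h_rQI)
  show "\<exists>E. rgraph 2 {0..<n} E \<and> Q_free {0..<n} E {(m, f)}"
    using exists_mf_free_graph[OF assms(1) finite_atLeastLessThan] by (simp add: Q_free_def)
  fix E
  assume "rgraph 2 {0..<n} E" and "Q_free {0..<n} E {(m, f)}"
  then have "\<forall>e\<in>E. card e = 2" and "\<not> has_induced {0..<n} E m f"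
    by (simp_all add: rgraph_def Q_free_def mf_free_def)
  then obtain S where "card S = t" "homogeneous 2 {0..<n} E S"
    using homogeneous_set_if_not_has_induced[of m E "{0..<n}" f t] assms by auto
  then show "t \<le> hom_number 2 {0..<n} E"
    using card_le_hom_number by fastforce
qed

lemma exists_nat_power_le_root_less_double:
  assumes "1 \<le> n" and "0 < k"
  shows "\<exists>t::nat. 1 \<le> t \<and> t ^ k \<le> n \<and> real n powr (1 / real k) < 2 * real t"
proof -
  define x where "x = real n powr (1 / real k)"
  have "1 \<le> x"
    using assms unfolding x_def by (intro ge_one_powr_ge_zero) auto
  have "x ^ k = real n"
    using assms by (simp add: x_def powr_realpow [symmetric] powr_powr)
  define t where "t = nat \<lfloor>x\<rfloor>"
  have "1 \<le> t" "real t \<le> x" "x < real t + 1"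
    using \<open>1 \<le> x\<close> by (auto simp: t_def le_nat_iff)
  moreover have "real (t ^ k) \<le> real n"
    unfolding of_nat_power \<open>x ^ k = real n\<close>[symmetric] using \<open>real t \<le> x\<close> by (intro power_mono) auto
  ultimately show ?thesis
    unfolding x_def[symmetric] by (intro exI[of _ t]) auto
qed

theorem mainTheorem1:
  fixes m f :: nat
  assumes "m \<ge> 2" and "f \<le> m choose 2"
  shows "\<exists>c::real. c > 0 \<and>
           (\<forall>n::nat. n \<ge> 1 \<longrightarrow> real (h_rmf 2 n m f) > c * real n powr (1 / (real m - 1)))"
proof (intro exI[of _ "1/2"] conjI allI impI)
  fix n :: nat
  assume "n \<ge> 1"
  have "real m - 1 = real (m - 1)" "0 < m - 1"
    using assms(1) by auto
  obtain t where t: "1 \<le> t" "t ^ (m - 1) \<le> n" "real n powr (1 / real (m - 1)) < 2 * real t"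
    using exists_nat_power_le_root_less_double[OF \<open>n \<ge> 1\<close> \<open>0 < m - 1\<close>] by blast
  have "t \<le> h_rmf 2 n m f"
    using le_h_rmf[OF assms t(1,2)] .
  with t(3) show "1/2 * real n powr (1 / (real m - 1)) < real (h_rmf 2 n m f)"
    unfolding \<open>real m - 1 = real (m - 1)\<close> by linarith
qed simp

end
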